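(* Let $N\ge1$, $K\ge2$ be integers with $N$ divisible by $K$ ($K$ may be odd or even), put $m=N/K$, and let $\alpha\in[0,2]$. Then $\mathcal{B}_\alpha(N,K)$ has a symmetric equilibrium strategy that induces uniform marginals, and in the resulting equilibrium each player's expected payoff equals $K\cdot\frac{m+\alpha/2}{2m+1}$.
   Context: Fix integers $N\ge1$, $K\ge2$ and a real number $\alpha$. The Colonel Blotto game $\mathcal{B}_\alpha(N,K)$ is the two-player simultaneous-move game with players $A,B$, each with pure strategy set $S=\{s\in\{0,1,\ldots,N\}^K:\sum_{k=1}^K s_k=N\}$, in which the payoff of player $i$ at the pure profile $(s^i,s^{-i})$ is $\pi^i(s^i,s^{-i})=\sum_{k=1}^K\big(\mathbf 1[s^i_k>s^{-i}_k]+\tfrac{\alpha}{2}\mathbf 1[s^i_k=s^{-i}_k]\big)$. Mixed strategies are probability distributions on $S$, with expected payoffs under independent randomization. A symmetric equilibrium strategy is a mixed strategy $\sigma$ such that $(\sigma,\sigma)$ is a Nash equilibrium. For a mixed strategy $\sigma$ and battlefield $k$, the marginal $\sigma_k$ is the distribution of $s_k$ when $s\sim\sigma$; with $m=N/K$, $\sigma$ induces uniform marginals if every $\sigma_k$ is the uniform distribution on $\{0,1,\ldots,2m\}$. *)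

theory Defs
  imports "HOL-Probability.Probability"
begin

definition blotto_S :: "nat \<Rightarrow> nat \<Rightarrow> (nat \<Rightarrow> nat) set" where
  "blotto_S N K = {s. (\<forall>k. K \<le> k \<longrightarrow> s k = 0) \<and> (\<forall>k<K. s k \<le> N) \<and> (\<Sum>k<K. s k) = N}"

definition blotto_payoff :: "real \<Rightarrow> nat \<Rightarrow> (nat \<Rightarrow> nat) \<Rightarrow> (nat \<Rightarrow> nat) \<Rightarrow> real" where
  "blotto_payoff \<alpha> K s t =
     (\<Sum>k<K. (if s k > t k then 1 else 0) + (\<alpha> / 2) * (if s k = t k then 1 else 0))"

definition mixed_strategy :: "nat \<Rightarrow> nat \<Rightarrow> (nat \<Rightarrow> nat) pmf \<Rightarrow> bool" where
  "mixed_strategy N K \<sigma> \<longleftrightarrow> set_pmf \<sigma> \<subseteq> blotto_S N K"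

definition exp_payoff :: "real \<Rightarrow> nat \<Rightarrow> (nat \<Rightarrow> nat) pmf \<Rightarrow> (nat \<Rightarrow> nat) pmf \<Rightarrow> real" where
  "exp_payoff \<alpha> K \<sigma> \<tau> = measure_pmf.expectation (pair_pmf \<sigma> \<tau>) (\<lambda>(s, t). blotto_payoff \<alpha> K s t)"

definition nash_eq :: "nat \<Rightarrow> nat \<Rightarrow> real \<Rightarrow> (nat \<Rightarrow> nat) pmf \<Rightarrow> (nat \<Rightarrow> nat) pmf \<Rightarrow> bool" where
  "nash_eq N K \<alpha> \<sigma>A \<sigma>B \<longleftrightarrow>
     mixed_strategy N K \<sigma>A \<and> mixed_strategy N K \<sigma>B \<and>
     (\<forall>\<tau>. mixed_strategy N K \<tau> \<longrightarrow> exp_payoff \<alpha> K \<tau> \<sigma>B \<le> exp_payoff \<alpha> K \<sigma>A \<sigma>B) \<and>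
     (\<forall>\<tau>. mixed_strategy N K \<tau> \<longrightarrow> exp_payoff \<alpha> K \<tau> \<sigma>A \<le> exp_payoff \<alpha> K \<sigma>B \<sigma>A)"

definition symmetric_equilibrium :: "nat \<Rightarrow> nat \<Rightarrow> real \<Rightarrow> (nat \<Rightarrow> nat) pmf \<Rightarrow> bool" where
  "symmetric_equilibrium N K \<alpha> \<sigma> \<longleftrightarrow> nash_eq N K \<alpha> \<sigma> \<sigma>"

definition marginal :: "(nat \<Rightarrow> nat) pmf \<Rightarrow> nat \<Rightarrow> nat pmf" where
  "marginal \<sigma> k = map_pmf (\<lambda>s. s k) \<sigma>"

definition uniform_marginals :: "nat \<Rightarrow> nat \<Rightarrow> (nat \<Rightarrow> nat) pmf \<Rightarrow> bool" where
  "uniform_marginals N K \<sigma> \<longleftrightarrow> (\<forall>k<K. marginal \<sigma> k = pmf_of_set {0 .. 2 * (N div K)})"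

end

theory Submission
  imports Defs
begin

text \<open>If the opponent's marginals are uniform on \<open>{0..2m}\<close>, a pure allocation \<open>s\<close> earns
  \<open>\<Sum>\<^sub>k (min(s\<^sub>k, 2m+1) + \<alpha>/2 [s\<^sub>k \<le> 2m]) / (2m+1)\<close>, by linearity of expectation. For \<open>\<alpha> \<ge> 0\<close>
  this is at most \<open>(N + K\<alpha>/2)/(2m+1)\<close>, with equality when every \<open>s\<^sub>k \<le> 2m\<close>. So a mixed strategy
  with uniform marginals supported on such allocations equalizes all pure strategies it uses and
  is a best response to itself. Such a strategy is the uniform mixture, over \<open>j \<in> {0..2m}\<close>, of
  allocations whose every coordinate is a permutation of \<open>{0..2m}\<close> in \<open>j\<close>.\<close>

definition shifted_alloc :: "nat \<Rightarrow> nat \<Rightarrow> nat" where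
  "shifted_alloc m j = (if j \<le> m then j + m else j - m - 1)"

definition doubled_alloc :: "nat \<Rightarrow> nat \<Rightarrow> nat" where
  "doubled_alloc m j = (if j \<le> m then 2 * m - 2 * j else 4 * m + 1 - 2 * j)"

definition alternating_alloc :: "nat \<Rightarrow> nat \<Rightarrow> nat \<Rightarrow> nat" where
  "alternating_alloc m j k = (if even k then j else 2 * m - j)"

text \<open>For odd \<open>K\<close> the last three receive
  \<open>j\<close>, \<open>j + m\<close> and \<open>2m - 2j\<close>, the latter two taken modulo \<open>2m + 1\<close>; they sum to \<open>3m\<close>.\<close>
definition uniform_alloc :: "nat \<Rightarrow> nat \<Rightarrow> nat \<Rightarrow> nat \<Rightarrow> nat" where
  "uniform_alloc K m j k =
     (if K \<le> k then 0
      else if even K \<or> k + 3 < K then alternating_alloc m j k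
      else if k + 3 = K then j
      else if k + 2 = K then shifted_alloc m j
      else doubled_alloc m j)"

lemma uniform_alloc_le: "j \<le> 2 * m \<Longrightarrow> uniform_alloc K m j k \<le> 2 * m"
  by (auto simp: uniform_alloc_def alternating_alloc_def shifted_alloc_def doubled_alloc_def)

lemma inj_on_uniform_alloc:
  assumes "k < K"
  shows "inj_on (\<lambda>j. uniform_alloc K m j k) {0..2 * m}"
proof -
  have "inj_on (shifted_alloc m) {0..2 * m}"
    unfolding inj_on_def shifted_alloc_def by auto
  moreover have "inj_on (doubled_alloc m) {0..2 * m}"
    unfolding inj_on_def doubled_alloc_def by auto presburger+
  moreover have "inj_on (\<lambda>j. alternating_alloc m j k) {0..2 * m}"
    unfolding inj_on_def alternating_alloc_def by auto
  moreover have "(\<lambda>j. uniform_alloc K m j k) \<in>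
      {\<lambda>j. alternating_alloc m j k, \<lambda>j. j, shifted_alloc m, doubled_alloc m}"
    using assms by (auto simp: uniform_alloc_def fun_eq_iff)
  ultimately show ?thesis
    by auto
qed

lemma bij_betw_uniform_alloc:
  assumes "k < K"
  shows "bij_betw (\<lambda>j. uniform_alloc K m j k) {0..2 * m} {0..2 * m}"
proof -
  have "(\<lambda>j. uniform_alloc K m j k) ` {0..2 * m} \<subseteq> {0..2 * m}"
    by (auto simp: uniform_alloc_le)
  then show ?thesis
    using inj_on_uniform_alloc[OF assms] by (simp add: bij_betw_def endo_inj_surj)
qed

lemma sum_alternating_alloc: "j \<le> 2 * m \<Longrightarrow> (\<Sum>k<2 * p. alternating_alloc m j k) = p * (2 * m)"
  by (induction p) (auto simp: alternating_alloc_def)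

lemma sum_uniform_alloc:
  assumes "2 \<le> K" "j \<le> 2 * m"
  shows "(\<Sum>k<K. uniform_alloc K m j k) = K * m"
proof (cases "even K")
  case True
  then obtain p where p: "K = 2 * p" by blast
  have "(\<Sum>k<K. uniform_alloc K m j k) = (\<Sum>k<2 * p. alternating_alloc m j k)"
    using True p by (intro sum.cong) (auto simp: uniform_alloc_def)
  then show ?thesis
    using sum_alternating_alloc[OF assms(2)] p by simp
next
  case False
  have "\<exists>p. K = 2 * p + 3"
    using False assms(1) by presburger
  then obtain p where p: "K = 2 * p + 3" ..
  have "{..<K} = {2 * p + 2, 2 * p + 1, 2 * p} \<union> {..<2 * p}"
    using p by auto
  then have "(\<Sum>k<K. uniform_alloc K m j k)
      = uniform_alloc K m j (2 * p + 2) + uniform_alloc K m j (2 * p + 1) + uniform_alloc K m j (2 * p)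
        + (\<Sum>k<2 * p. uniform_alloc K m j k)"
    by simp
  also have "(\<Sum>k<2 * p. uniform_alloc K m j k) = (\<Sum>k<2 * p. alternating_alloc m j k)"
    using p by (intro sum.cong) (auto simp: uniform_alloc_def)
  finally show ?thesis
    using sum_alternating_alloc[OF assms(2), of p] p assms(2)
    by (auto simp: uniform_alloc_def shifted_alloc_def doubled_alloc_def algebra_simps)
qed

lemma uniform_alloc_in_blotto_S:
  assumes "2 \<le> K" "j \<le> 2 * m"
  shows "uniform_alloc K m j \<in> blotto_S (K * m) K"
proof -
  have "uniform_alloc K m j k \<le> K * m" for k
    using uniform_alloc_le[OF assms(2), of K k] assms(1)
    by (meson le_trans mult_le_mono1)
  moreover have "uniform_alloc K m j k = 0" if "K \<le> k" for k
    using that by (simp add: uniform_alloc_def)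
  ultimately show ?thesis
    using sum_uniform_alloc[OF assms] by (simp add: blotto_S_def)
qed

definition uniform_alloc_strategy :: "nat \<Rightarrow> nat \<Rightarrow> (nat \<Rightarrow> nat) pmf" where
  "uniform_alloc_strategy K m = map_pmf (uniform_alloc K m) (pmf_of_set {0..2 * m})"

lemma set_pmf_uniform_alloc_strategy:
  "set_pmf (uniform_alloc_strategy K m) = uniform_alloc K m ` {0..2 * m}"
  by (simp add: uniform_alloc_strategy_def)

lemma mixed_strategy_uniform_alloc_strategy:
  "2 \<le> K \<Longrightarrow> mixed_strategy (K * m) K (uniform_alloc_strategy K m)"
  by (auto simp: mixed_strategy_def set_pmf_uniform_alloc_strategy uniform_alloc_in_blotto_S)

lemma uniform_marginals_uniform_alloc_strategy:
  assumes "0 < K"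
  shows "uniform_marginals (K * m) K (uniform_alloc_strategy K m)"
  unfolding uniform_marginals_def
proof (intro allI impI)
  fix k assume "k < K"
  have "marginal (uniform_alloc_strategy K m) k
      = map_pmf (\<lambda>j. uniform_alloc K m j k) (pmf_of_set {0..2 * m})"
    by (simp add: marginal_def uniform_alloc_strategy_def pmf.map_comp o_def)
  also have "\<dots> = pmf_of_set {0..2 * m}"
    using bij_betw_uniform_alloc[OF \<open>k < K\<close>]
    by (subst map_pmf_of_set_inj) (auto simp: bij_betw_def)
  finally show "marginal (uniform_alloc_strategy K m) k = pmf_of_set {0..2 * (K * m div K)}"
    using assms by simp
qed

definition battle_payoff :: "real \<Rightarrow> nat \<Rightarrow> nat \<Rightarrow> real" where
  "battle_payoff \<alpha> x y = (if x > y then 1 else 0) + (\<alpha> / 2) * (if x = y then 1 else 0)"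

lemma blotto_payoff_eq_sum_battle_payoff:
  "blotto_payoff \<alpha> K s t = (\<Sum>k<K. battle_payoff \<alpha> (s k) (t k))"
  by (simp add: blotto_payoff_def battle_payoff_def)

lemma sum_battle_payoff_atMost:
  "(\<Sum>y\<le>n. battle_payoff \<alpha> x y) = real (min x (Suc n)) + (if x \<le> n then \<alpha> / 2 else 0)"
  by (induction n) (auto simp: battle_payoff_def min_def)

lemma expectation_blotto_payoff_marginal:
  "measure_pmf.expectation \<sigma> (blotto_payoff \<alpha> K s)
     = (\<Sum>k<K. measure_pmf.expectation (marginal \<sigma> k) (battle_payoff \<alpha> (s k)))"
proof -
  have "measure_pmf.expectation \<sigma> (blotto_payoff \<alpha> K s)
      = measure_pmf.expectation \<sigma> (\<lambda>t. \<Sum>k<K. battle_payoff \<alpha> (s k) (t k))"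
    by (simp add: blotto_payoff_eq_sum_battle_payoff[abs_def])
  also have "\<dots> = (\<Sum>k<K. measure_pmf.expectation \<sigma> (\<lambda>t. battle_payoff \<alpha> (s k) (t k)))"
    by (rule Bochner_Integration.integral_sum,
        rule measure_pmf.integrable_const_bound[where B = "1 + \<bar>\<alpha>\<bar> / 2"])
       (auto simp: battle_payoff_def)
  finally show ?thesis
    by (simp add: marginal_def)
qed

lemma expectation_blotto_payoff_uniform_marginals:
  assumes "uniform_marginals N K \<sigma>"
  defines "m \<equiv> N div K"
  shows "measure_pmf.expectation \<sigma> (blotto_payoff \<alpha> K s)
     = (\<Sum>k<K. real (min (s k) (Suc (2 * m))) + (if s k \<le> 2 * m then \<alpha> / 2 else 0))
       / real (Suc (2 * m))"
  using assms
  by (simp add: expectation_blotto_payoff_marginal uniform_marginals_def integral_pmf_of_set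
      sum_divide_distrib flip: atLeast0AtMost sum_battle_payoff_atMost)

lemma expectation_blotto_payoff_uniform_marginals_le:
  assumes "uniform_marginals N K \<sigma>" "0 \<le> \<alpha>" "s \<in> blotto_S N K"
  shows "measure_pmf.expectation \<sigma> (blotto_payoff \<alpha> K s)
     \<le> (real N + real K * (\<alpha> / 2)) / real (Suc (2 * (N div K)))"
proof -
  have "(\<Sum>k<K. real (min (s k) (Suc (2 * (N div K)))) + (if s k \<le> 2 * (N div K) then \<alpha> / 2 else 0))
      \<le> (\<Sum>k<K. real (s k) + \<alpha> / 2)"
    using assms(2) by (intro sum_mono) auto
  also have "\<dots> = real N + real K * (\<alpha> / 2)"
    using assms(3) by (simp add: blotto_S_def sum.distrib flip: of_nat_sum)
  finally show ?thesis
    unfolding expectation_blotto_payoff_uniform_marginals[OF assms(1)]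
    by (simp add: divide_right_mono)
qed

lemma expectation_blotto_payoff_uniform_marginals_eq:
  assumes "uniform_marginals N K \<sigma>" "s \<in> blotto_S N K" "\<forall>k<K. s k \<le> 2 * (N div K)"
  shows "measure_pmf.expectation \<sigma> (blotto_payoff \<alpha> K s)
     = (real N + real K * (\<alpha> / 2)) / real (Suc (2 * (N div K)))"
proof -
  have "(\<Sum>k<K. real (min (s k) (Suc (2 * (N div K)))) + (if s k \<le> 2 * (N div K) then \<alpha> / 2 else 0))
      = (\<Sum>k<K. real (s k) + \<alpha> / 2)"
    using assms(3) by (intro sum.cong) auto
  also have "\<dots> = real N + real K * (\<alpha> / 2)"
    using assms(2) by (simp add: blotto_S_def sum.distrib flip: of_nat_sum)
  finally show ?thesis
    unfolding expectation_blotto_payoff_uniform_marginals[OF assms(1)] by simp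
qed

lemma finite_blotto_S: "finite (blotto_S N K)"
proof (rule finite_subset)
  show "blotto_S N K \<subseteq> {f. \<forall>x. (x \<in> {..<K} \<longrightarrow> f x \<in> {..N}) \<and> (x \<notin> {..<K} \<longrightarrow> f x = 0)}"
    by (auto simp: blotto_S_def)
qed (intro finite_set_of_finite_funs; simp)

lemma finite_set_pmf_mixed_strategy: "mixed_strategy N K \<tau> \<Longrightarrow> finite (set_pmf \<tau>)"
  unfolding mixed_strategy_def using finite_blotto_S by (rule finite_subset[rotated])

lemma exp_payoff_iterated:
  assumes "finite (set_pmf \<tau>)" "finite (set_pmf \<sigma>)"
  shows "exp_payoff \<alpha> K \<tau> \<sigma>
     = measure_pmf.expectation \<tau> (\<lambda>s. measure_pmf.expectation \<sigma> (blotto_payoff \<alpha> K s))"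
proof -
  have "exp_payoff \<alpha> K \<tau> \<sigma>
      = (\<Sum>s\<in>set_pmf \<tau>. pmf \<tau> s *\<^sub>R measure_pmf.expectation (map_pmf (Pair s) \<sigma>) (case_prod (blotto_payoff \<alpha> K)))"
    unfolding exp_payoff_def pair_pmf_def map_pmf_def[symmetric]
    using assms by (intro pmf_expectation_bind) auto
  also have "\<dots> = measure_pmf.expectation \<tau> (\<lambda>s. measure_pmf.expectation \<sigma> (blotto_payoff \<alpha> K s))"
    using assms(1) by (simp add: integral_measure_pmf_real mult.commute)
  finally show ?thesis .
qed

lemma symmetric_equilibrium_if_equalizing:
  assumes \<sigma>: "mixed_strategy N K \<sigma>"
    and le: "\<And>s. s \<in> blotto_S N K \<Longrightarrow> measure_pmf.expectation \<sigma> (blotto_payoff \<alpha> K s) \<le> V"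
    and eq: "\<And>s. s \<in> set_pmf \<sigma> \<Longrightarrow> measure_pmf.expectation \<sigma> (blotto_payoff \<alpha> K s) = V"
  shows "symmetric_equilibrium N K \<alpha> \<sigma> \<and> exp_payoff \<alpha> K \<sigma> \<sigma> = V"
proof -
  have self: "exp_payoff \<alpha> K \<sigma> \<sigma> = V"
    using \<sigma> eq
    by (auto simp: exp_payoff_iterated finite_set_pmf_mixed_strategy AE_measure_pmf_iff
        integrable_measure_pmf_finite intro!: antisym measure_pmf.integral_le_const
        measure_pmf.integral_ge_const)
  have "exp_payoff \<alpha> K \<tau> \<sigma> \<le> V" if \<tau>: "mixed_strategy N K \<tau>" for \<tau>
    unfolding exp_payoff_iterated[OF finite_set_pmf_mixed_strategy[OF \<tau>] finite_set_pmf_mixed_strategy[OF \<sigma>]]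
  proof (rule measure_pmf.integral_le_const)
    show "integrable \<tau> (\<lambda>s. measure_pmf.expectation \<sigma> (blotto_payoff \<alpha> K s))"
      using \<tau> by (simp add: finite_set_pmf_mixed_strategy integrable_measure_pmf_finite)
    show "AE s in \<tau>. measure_pmf.expectation \<sigma> (blotto_payoff \<alpha> K s) \<le> V"
      using \<tau> le by (auto simp: AE_measure_pmf_iff mixed_strategy_def)
  qed
  with \<sigma> self show ?thesis
    by (simp add: symmetric_equilibrium_def nash_eq_def)
qed

theorem proposition5:
  fixes N K :: nat and \<alpha> :: real
  assumes "N \<ge> 1" and "K \<ge> 2" and "K dvd N"
    and "0 \<le> \<alpha>" and "\<alpha> \<le> 2"
  shows "\<exists>\<sigma>. symmetric_equilibrium N K \<alpha> \<sigma> \<and> uniform_marginals N K \<sigma> \<and>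
           exp_payoff \<alpha> K \<sigma> \<sigma> = real K * ((real (N div K) + \<alpha> / 2) / (2 * real (N div K) + 1))"
proof -
  define m where "m = N div K"
  have N: "N = K * m"
    using \<open>K dvd N\<close> by (simp add: m_def)
  define \<sigma> where "\<sigma> = uniform_alloc_strategy K m"
  have uniform: "uniform_marginals N K \<sigma>"
    using \<open>K \<ge> 2\<close> by (simp add: N \<sigma>_def uniform_marginals_uniform_alloc_strategy)
  have mixed: "mixed_strategy N K \<sigma>"
    using \<open>K \<ge> 2\<close> by (simp add: N \<sigma>_def mixed_strategy_uniform_alloc_strategy)
  have support: "s \<in> blotto_S N K \<and> (\<forall>k<K. s k \<le> 2 * (N div K))" if "s \<in> set_pmf \<sigma>" for s
    using that mixed by (auto simp: mixed_strategy_def \<sigma>_def set_pmf_uniform_alloc_strategy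
        uniform_alloc_le m_def)
  have "symmetric_equilibrium N K \<alpha> \<sigma> \<and>
      exp_payoff \<alpha> K \<sigma> \<sigma> = (real N + real K * (\<alpha> / 2)) / real (Suc (2 * (N div K)))"
    using mixed uniform \<open>0 \<le> \<alpha>\<close> support
    by (intro symmetric_equilibrium_if_equalizing expectation_blotto_payoff_uniform_marginals_le
        expectation_blotto_payoff_uniform_marginals_eq) auto
  moreover have "(real N + real K * (\<alpha> / 2)) / real (Suc (2 * (N div K)))
      = real K * ((real (N div K) + \<alpha> / 2) / (2 * real (N div K) + 1))"
    by (simp add: N \<open>K \<ge> 2\<close> field_simps)
  ultimately show ?thesis
    using uniform by auto
qed

end
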